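(* Let $E$ be a finite-dimensional real affine space, let $\lambda$ be a positive Borel measure on $E$, and let $\mathcal{H}$ be a nonempty subset of $G(E)$ such that $\int e^{h}\,d\lambda=1$ for all $h\in\mathcal{H}$. Let $\overline{\mathcal{H}}$ be the closure of $\mathcal{H}$ in $G(E)$. Then for every $x\in E$ there exists $\bar h\in\overline{\mathcal{H}}$ with $\bar h(x)=\sup_{h\in\mathcal{H}}h(x)$; that is, maximum likelihood estimates always exist in $\overline{\mathcal{H}}$.
   Context: $G(E)$ is the set of generalized affine functions on $E$ (functions $E\to\mathbb{R}\cup\{\pm\infty\}$ that are both convex and concave in the extended-real-valued sense), with the topology of pointwise convergence. Here $e^{+\infty}=+\infty$, $e^{-\infty}=0$. *)

theory Defs
  imports "HOL-Analysis.Analysis"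
begin

definition ext_convex :: "('a::real_vector \<Rightarrow> ereal) \<Rightarrow> bool" where
  "ext_convex f \<longleftrightarrow> convex {(x, \<mu>::real). f x \<le> ereal \<mu>}"

definition ext_concave :: "('a::real_vector \<Rightarrow> ereal) \<Rightarrow> bool" where
  "ext_concave f \<longleftrightarrow> convex {(x, \<mu>::real). ereal \<mu> \<le> f x}"

definition gen_affine :: "('a::real_vector \<Rightarrow> ereal) set" where
  "gen_affine = {f. ext_convex f \<and> ext_concave f}"

fun eexp :: "ereal \<Rightarrow> ennreal" where
  "eexp (ereal r) = ennreal (exp r)"
| "eexp PInfty = \<infinity>"
| "eexp MInfty = 0"

end

theory Submission
  imports Defs
begin

text \<open>
  The pointwise topology on functions into the compact space of extended reals is compact
  (Tychonoff), so the closure of \<open>H\<close> is compact and the continuous evaluation at \<open>x\<close>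
  attains its supremum on it; by continuity this supremum is the one over \<open>H\<close>.
  The closure stays inside \<open>G(E)\<close>, because convexity and concavity of
  extended-real-valued functions can be phrased by conditions with strict premises,
  and these are closed under pointwise convergence.
\<close>

lemma compact_UNIV_fun:
  assumes "compact (UNIV :: 'b::topological_space set)"
  shows "compact (UNIV :: ('a \<Rightarrow> 'b) set)"
proof -
  have "compact_space (euclidean :: 'b topology)"
    using assms by (simp add: compact_space_def)
  then have "compact_space (product_topology (\<lambda>_. euclidean :: 'b topology) (UNIV :: 'a set))"
    using compact_space_product_topology by blast
  then show ?thesis
    by (simp add: euclidean_product_topology compact_space_def)
qed

lemma closure_attains_SUP_eval:
  fixes H :: "('a \<Rightarrow> 'b::{complete_linorder,linorder_topology,second_countable_topology}) set"
  assumes "H \<noteq> {}"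
  shows "\<exists>hb \<in> closure H. hb x = (SUP h\<in>H. h x)"
proof -
  define s where "s = (SUP h\<in>H. h x)"
  have eval_cont: "continuous_on UNIV (\<lambda>f::'a \<Rightarrow> 'b. f x)"
    by simp
  have "compact (closure H)"
    using compact_Int_closed[OF compact_UNIV_fun[OF compact_UNIV] closed_closure[of H]] by simp
  then have "closed ((\<lambda>h. h x) ` closure H)"
    by (intro compact_imp_closed compact_continuous_image continuous_on_subset[OF eval_cont]) auto
  moreover have "(\<lambda>h. h x) ` closure H \<noteq> {}"
    using assms closure_subset by blast
  ultimately have "Sup ((\<lambda>h. h x) ` closure H) \<in> (\<lambda>h. h x) ` closure H"
    by (rule closed_contains_Sup_cl)
  then obtain hb where hb: "hb \<in> closure H" "hb x = Sup ((\<lambda>h. h x) ` closure H)"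
    by auto
  have "closed {f::'a \<Rightarrow> 'b. f x \<le> s}"
    by (intro closed_Collect_le continuous_on_const eval_cont)
  moreover have "H \<subseteq> {f. f x \<le> s}"
    unfolding s_def by (auto intro: SUP_upper)
  ultimately have "closure H \<subseteq> {f. f x \<le> s}"
    by (rule closure_minimal[rotated])
  then have "hb x \<le> s"
    using hb by (auto intro!: Sup_least)
  moreover have "s \<le> hb x"
    unfolding s_def hb(2) by (rule SUP_subset_mono[OF closure_subset]) simp
  ultimately show ?thesis
    using hb(1) s_def by auto
qed

lemma ext_convex_iff_strict:
  "ext_convex (f::'a::real_vector \<Rightarrow> ereal) \<longleftrightarrow>
    (\<forall>x y a b t. 0 \<le> t \<longrightarrow> t \<le> 1 \<longrightarrow> f x < ereal a \<longrightarrow> f y < ereal b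
      \<longrightarrow> f ((1 - t) *\<^sub>R x + t *\<^sub>R y) \<le> ereal ((1 - t) * a + t * b))"
  (is "_ \<longleftrightarrow> ?strict")
proof
  assume "ext_convex f"
  then have "\<And>x y a b t. 0 \<le> t \<Longrightarrow> t \<le> 1 \<Longrightarrow> f x \<le> ereal a \<Longrightarrow> f y \<le> ereal b
      \<Longrightarrow> f ((1 - t) *\<^sub>R x + t *\<^sub>R y) \<le> ereal ((1 - t) * a + t * b)"
    unfolding ext_convex_def convex_alt by fastforce
  then show ?strict
    by (meson less_imp_le)
next
  assume strict: ?strict
  show "ext_convex f"
    unfolding ext_convex_def convex_alt
  proof clarsimp
    fix x y :: 'a and a b t :: real
    assume le: "f x \<le> ereal a" "f y \<le> ereal b" and t: "0 \<le> t" "t \<le> 1"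
    show "f ((1 - t) *\<^sub>R x + t *\<^sub>R y) \<le> ereal ((1 - t) * a + t * b)"
    proof (rule ereal_le_epsilon2)
      fix e :: real
      assume "0 < e"
      then have "ereal a < ereal (a + e)" "ereal b < ereal (b + e)"
        by simp_all
      with le have "f x < ereal (a + e)" "f y < ereal (b + e)"
        by (meson order.strict_trans1)+
      with strict t have "f ((1 - t) *\<^sub>R x + t *\<^sub>R y) \<le> ereal ((1 - t) * (a + e) + t * (b + e))"
        by blast
      also have "(1 - t) * (a + e) + t * (b + e) = ((1 - t) * a + t * b) + e"
        by algebra
      finally show "f ((1 - t) *\<^sub>R x + t *\<^sub>R y) \<le> ereal ((1 - t) * a + t * b) + ereal e"
        by simp
    qed
  qed
qed

lemma ext_concave_iff_strict:
  "ext_concave (f::'a::real_vector \<Rightarrow> ereal) \<longleftrightarrow>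
    (\<forall>x y a b t. 0 \<le> t \<longrightarrow> t \<le> 1 \<longrightarrow> ereal a < f x \<longrightarrow> ereal b < f y
      \<longrightarrow> ereal ((1 - t) * a + t * b) \<le> f ((1 - t) *\<^sub>R x + t *\<^sub>R y))"
  (is "_ \<longleftrightarrow> ?strict")
proof
  assume "ext_concave f"
  then have "\<And>x y a b t. 0 \<le> t \<Longrightarrow> t \<le> 1 \<Longrightarrow> ereal a \<le> f x \<Longrightarrow> ereal b \<le> f y
      \<Longrightarrow> ereal ((1 - t) * a + t * b) \<le> f ((1 - t) *\<^sub>R x + t *\<^sub>R y)"
    unfolding ext_concave_def convex_alt by fastforce
  then show ?strict
    by (meson less_imp_le)
next
  assume strict: ?strict
  show "ext_concave f"
    unfolding ext_concave_def convex_alt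
  proof clarsimp
    fix x y :: 'a and a b t :: real
    assume le: "ereal a \<le> f x" "ereal b \<le> f y" and t: "0 \<le> t" "t \<le> 1"
    show "ereal ((1 - t) * a + t * b) \<le> f ((1 - t) *\<^sub>R x + t *\<^sub>R y)"
    proof (rule ereal_le_epsilon2)
      fix e :: real
      assume "0 < e"
      then have "ereal (a - e) < ereal a" "ereal (b - e) < ereal b"
        by simp_all
      with le have "ereal (a - e) < f x" "ereal (b - e) < f y"
        by (meson order.strict_trans2)+
      with strict t have lower: "ereal ((1 - t) * (a - e) + t * (b - e)) \<le> f ((1 - t) *\<^sub>R x + t *\<^sub>R y)"
        by blast
      have "ereal ((1 - t) * a + t * b) = ereal ((1 - t) * (a - e) + t * (b - e)) + ereal e"
        by (simp add: algebra_simps)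
      also have "\<dots> \<le> f ((1 - t) *\<^sub>R x + t *\<^sub>R y) + ereal e"
        using lower by (rule add_right_mono)
      finally show "ereal ((1 - t) * a + t * b) \<le> f ((1 - t) *\<^sub>R x + t *\<^sub>R y) + ereal e" .
    qed
  qed
qed

lemma closed_gen_affine: "closed (gen_affine :: ('a::real_vector \<Rightarrow> ereal) set)"
proof -
  have eval_cont: "\<And>x. continuous_on UNIV (\<lambda>f::'a \<Rightarrow> ereal. f x)"
    by simp
  have "gen_affine = {f::'a \<Rightarrow> ereal.
      (\<forall>x y a b t. 0 \<le> t \<longrightarrow> t \<le> 1 \<longrightarrow> f x < ereal a \<longrightarrow> f y < ereal b
        \<longrightarrow> f ((1 - t) *\<^sub>R x + t *\<^sub>R y) \<le> ereal ((1 - t) * a + t * b)) \<and>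
      (\<forall>x y a b t. 0 \<le> t \<longrightarrow> t \<le> 1 \<longrightarrow> ereal a < f x \<longrightarrow> ereal b < f y
        \<longrightarrow> ereal ((1 - t) * a + t * b) \<le> f ((1 - t) *\<^sub>R x + t *\<^sub>R y))}"
    unfolding gen_affine_def ext_convex_iff_strict ext_concave_iff_strict by blast
  also have "closed \<dots>"
    by (intro closed_Collect_conj closed_Collect_all closed_Collect_imp open_Collect_const
        open_Collect_less closed_Collect_le continuous_on_const eval_cont)
  finally show ?thesis .
qed

theorem theorem4:
  fixes lam :: "'a::euclidean_space measure"
    and H :: "('a \<Rightarrow> ereal) set"
  assumes "sets lam = sets borel"
    and "H \<noteq> {}"
    and "H \<subseteq> gen_affine"
    and "\<And>h. h \<in> H \<Longrightarrow> (\<integral>\<^sup>+ y. eexp (h y) \<partial>lam) = 1"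
  shows "\<forall>x. \<exists>hb \<in> closure H \<inter> gen_affine. hb x = (SUP h\<in>H. h x)"
proof
  fix x :: 'a
  have "closure H \<subseteq> gen_affine"
    using assms(3) closed_gen_affine by (rule closure_minimal)
  with closure_attains_SUP_eval[OF assms(2), of x]
  show "\<exists>hb \<in> closure H \<inter> gen_affine. hb x = (SUP h\<in>H. h x)"
    by blast
qed

end
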